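(* Let $N\ge 1$, $g>0$, $h>0$, and $u_m,\alpha_1,\dots,\alpha_N\in\mathbb{R}$. Let $A_N\in\mathbb{R}^{(N+2)\times(N+2)}$ be the matrix $$A_N=\begin{pmatrix} 0&1&0&\cdots&0\\ gh-u_m^2-\sum_{i=1}^N\frac{\alpha_i^2}{2i+1} & 2u_m & \frac{2\alpha_1}{3} & \cdots & \frac{2\alpha_N}{2N+1}\\ -2u_m\alpha_1 & 2\alpha_1 & u_m & & \\ \vdots & \vdots & & \ddots & \\ -2u_m\alpha_N & 2\alpha_N & & & u_m \end{pmatrix},$$ where the lower-right $N\times N$ block is $u_m I_N$ and all unspecified entries are zero. Then $$\det(A_N-\lambda I)=(u_m-\lambda)^N\left[(\lambda-u_m)^2-gh-\sum_{i=1}^N\frac{3\alpha_i^2}{2i+1}\right],$$ so the eigenvalues of $A_N$ are $$\lambda_{1,2}=u_m\pm\sqrt{gh+\sum_{i=1}^N\frac{3\alpha_i^2}{2i+1}},\qquad \lambda_{i+2}=u_m\ (i=1,\dots,N).$$ Moreover, $A_N$ is diagonalizable over $\mathbb{R}$ (the eigenvalue $u_m$ has an $N$-dimensional eigenspace), so the system $\partial_t U + A_N(U)\partial_x U=0$ is hyperbolic whenever $h>0$.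
   Context: $A_N$ is the system matrix (flux Jacobian minus non-conservative matrix) of the Shallow Water Linearized Moment Equations (SWLME) without source terms, written in the variables $U=(h,hu_m,h\alpha_1,\dots,h\alpha_N)$, where $h$ is the water height, $u_m$ the mean horizontal velocity, $\alpha_i$ the coefficients of the velocity profile in scaled Legendre polynomials, and $g$ the gravitational constant. *)

theory Defs
  imports "Jordan_Normal_Form.Jordan_Normal_Form"
begin

text \<open>System matrix A_N of the SWLME, indices 0..N+1 (row/column 0 = h, 1 = h u_m,
  k+1 = h alpha_k for k = 1..N). alpha is indexed 1..N.\<close>
definition swlme_matrix :: "nat \<Rightarrow> real \<Rightarrow> real \<Rightarrow> real \<Rightarrow> (nat \<Rightarrow> real) \<Rightarrow> real mat" where
  "swlme_matrix N g h um alpha = mat (N+2) (N+2) (\<lambda>(r,c).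
     if r = 0 then (if c = 1 then 1 else 0)
     else if r = 1 then
       (if c = 0 then g*h - um^2 - (\<Sum>i=1..N. alpha i ^ 2 / (2 * real i + 1))
        else if c = 1 then 2*um
        else 2 * alpha (c-1) / (2 * real (c-1) + 1))
     else
       (if c = 0 then -2*um*alpha (r-1)
        else if c = 1 then 2 * alpha (r-1)
        else if c = r then um else 0))"

end

theory Submission
  imports Defs "Jordan_Normal_Form.Jordan_Normal_Form_Uniqueness"
begin

(* The matrix is diagonalized by an explicit eigenbasis. Put beta_j = 2 alpha_j / (2j+1) and
   c = sqrt (g h + 3 sum_i alpha_i^2/(2i+1)). The vectors (1, u_m +- c, 2 alpha_1, ..., 2 alpha_N)
   are eigenvectors for u_m +- c, and for j = 1..N the vector with entries beta_j, u_m beta_j and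
   -g h [i = j] + alpha_i beta_j / 2 is an eigenvector for u_m; both checks come down to
   sum_j beta_j alpha_j = 2 sum_j alpha_j^2/(2j+1). For g h > 0 these N+2 vectors are linearly
   independent, so A_N is similar to the diagonal matrix of the speeds u_m + c, u_m - c, u_m, ..., u_m,
   from which the characteristic polynomial and the eigenvalues are read off. *)

lemma sum_lessThan_Suc_Suc_split:
  fixes f :: "nat \<Rightarrow> 'a::comm_monoid_add"
  shows "(\<Sum>k<N+2. f k) = f 0 + f 1 + (\<Sum>j=1..N. f (j+1))"
proof -
  have "(\<Sum>k<Suc (Suc N). f k) = f 0 + (f 1 + (\<Sum>k<N. f (Suc (Suc k))))"
    by (simp add: sum.lessThan_Suc_shift del: sum.lessThan_Suc)
  also have "(\<Sum>k<N. f (Suc (Suc k))) = (\<Sum>j=1..N. f (j+1))"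
    using sum.atLeast1_atMost_eq[of "\<lambda>j. f (j+1)" N] by simp
  finally show ?thesis by (simp add: add.assoc numeral_2_eq_2)
qed

lemma prod_lessThan_Suc_Suc_split:
  fixes f :: "nat \<Rightarrow> 'a::comm_monoid_mult"
  shows "(\<Prod>k<N+2. f k) = f 0 * f 1 * (\<Prod>j=1..N. f (j+1))"
proof -
  have "(\<Prod>k<Suc (Suc N). f k) = f 0 * (f 1 * (\<Prod>k<N. f (Suc (Suc k))))"
    by (simp add: prod.lessThan_Suc_shift del: prod.lessThan_Suc)
  also have "(\<Prod>k<N. f (Suc (Suc k))) = (\<Prod>j=1..N. f (j+1))"
    using prod.atLeast1_atMost_eq[of "\<lambda>j. f (j+1)" N] by simp
  finally show ?thesis by (simp add: mult.assoc numeral_2_eq_2)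
qed

lemma less_add_2_cases:
  fixes r N :: nat
  assumes "r < N + 2"
  obtains "r = 0" | "r = 1" | i where "r = i + 1" "1 \<le> i" "i \<le> N"
proof (cases r)
  case (Suc i)
  with assms that show ?thesis by (cases i) auto
qed (use that in auto)

lemma similar_mat_wit_if_mult_eq:
  fixes A P D :: "'a::field mat"
  assumes A: "A \<in> carrier_mat n n" and P: "P \<in> carrier_mat n n" and D: "D \<in> carrier_mat n n"
    and detP: "det P \<noteq> 0" and AP: "A * P = P * D"
  obtains Q where "similar_mat_wit A D P Q"
proof -
  obtain Q where Q: "Q \<in> carrier_mat n n" and QP: "Q * P = 1\<^sub>m n" and PQ: "P * Q = 1\<^sub>m n"
    using det_non_zero_imp_unit[OF P detP] unfolding Units_def ring_mat_def by auto
  have "A = A * P * Q" using A P Q by (simp add: assoc_mult_mat[OF A P Q] PQ)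
  also have "\<dots> = P * D * Q" by (simp only: AP)
  finally show ?thesis using that similar_mat_witI[OF PQ QP _ A D P Q] by blast
qed

lemma det_char_matrix_mat_diag:
  "det (char_matrix (mat_diag n f) e) = (\<Prod>i<n. f i - e)"
proof -
  have "det (char_matrix (mat_diag n f) e) = det (mat_diag n (\<lambda>i. f i - e))"
    by (rule arg_cong[where f = det]) (auto simp: char_matrix_def mat_diag_def)
  also have "\<dots> = prod_list (diag_mat (mat_diag n (\<lambda>i. f i - e)))"
    by (rule det_upper_triangular[OF _ mat_diag_dim]) (simp add: upper_triangular_def mat_diag_def)
  also have "\<dots> = (\<Prod>i<n. f i - e)"
    by (simp add: prod_list_diag_prod lessThan_atLeast0 mat_diag_def)
  finally show ?thesis .
qed

lemma char_matrix_eq_minus_smult_one: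
  "A \<in> carrier_mat n n \<Longrightarrow> char_matrix A e = A - e \<cdot>\<^sub>m 1\<^sub>m n"
  by (intro eq_matI) (auto simp: char_matrix_def)

lemma det_char_matrix_similar_mat_wit:
  assumes "similar_mat_wit A B P Q"
  shows "det (char_matrix A e) = det (char_matrix B e)"
  using det_similar similar_mat_wit_char_matrix[OF assms] similar_mat_def by blast

definition weight :: "(nat \<Rightarrow> real) \<Rightarrow> nat \<Rightarrow> real" where
  "weight alpha j = 2 * alpha j / (2 * real j + 1)"

definition alpha_energy :: "nat \<Rightarrow> (nat \<Rightarrow> real) \<Rightarrow> real" where
  "alpha_energy N alpha = (\<Sum>i=1..N. alpha i ^ 2 / (2 * real i + 1))"

lemma sum_three_alpha_sq: "(\<Sum>i=1..N. 3 * alpha i ^ 2 / (2 * real i + 1)) = 3 * alpha_energy N alpha"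
  by (simp add: alpha_energy_def sum_distrib_left)

lemma alpha_energy_nonneg: "alpha_energy N alpha \<ge> 0"
  unfolding alpha_energy_def by (intro sum_nonneg) auto

lemma sum_weight_mult_alpha: "(\<Sum>j=1..N. weight alpha j * alpha j) = 2 * alpha_energy N alpha"
  unfolding alpha_energy_def sum_distrib_left by (intro sum.cong) (auto simp: weight_def power2_eq_square)

lemma swlme_matrix_carrier: "swlme_matrix N g h um alpha \<in> carrier_mat (N+2) (N+2)"
  by (simp add: swlme_matrix_def)

lemma swlme_matrix_mult_vec_nth:
  assumes v: "v \<in> carrier_vec (N+2)"
  shows "(swlme_matrix N g h um alpha *\<^sub>v v) $ 0 = v $ 1"
    and "(swlme_matrix N g h um alpha *\<^sub>v v) $ 1 = (g*h - um^2 - alpha_energy N alpha) * v $ 0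
           + 2*um * v $ 1 + (\<Sum>j=1..N. weight alpha j * v $ (j+1))"
    and "1 \<le> i \<Longrightarrow> i \<le> N \<Longrightarrow> (swlme_matrix N g h um alpha *\<^sub>v v) $ (i+1)
           = -2*um*alpha i * v $ 0 + 2 * alpha i * v $ 1 + um * v $ (i+1)"
proof -
  let ?A = "swlme_matrix N g h um alpha"
  have row: "(?A *\<^sub>v v) $ r = ?A $$ (r,0) * v $ 0 + ?A $$ (r,1) * v $ 1
      + (\<Sum>j=1..N. ?A $$ (r,j+1) * v $ (j+1))" if "r < N+2" for r
  proof -
    have "(?A *\<^sub>v v) $ r = (\<Sum>k<N+2. ?A $$ (r,k) * v $ k)"
      using that v swlme_matrix_carrier[of N g h um alpha]
      by (simp add: scalar_prod_def lessThan_atLeast0)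
    then show ?thesis by (simp only: sum_lessThan_Suc_Suc_split)
  qed
  show "(?A *\<^sub>v v) $ 0 = v $ 1"
    by (subst row) (simp_all add: swlme_matrix_def)
  show "(?A *\<^sub>v v) $ 1 = (g*h - um^2 - alpha_energy N alpha) * v $ 0
           + 2*um * v $ 1 + (\<Sum>j=1..N. weight alpha j * v $ (j+1))"
    by (subst row) (simp_all add: swlme_matrix_def alpha_energy_def weight_def)
  assume i: "1 \<le> i" "i \<le> N"
  have "(\<Sum>j=1..N. ?A $$ (i+1,j+1) * v $ (j+1)) = (\<Sum>j=1..N. if j = i then um * v $ (i+1) else 0)"
    using i by (intro sum.cong) (auto simp: swlme_matrix_def)
  then show "(?A *\<^sub>v v) $ (i+1) = -2*um*alpha i * v $ 0 + 2 * alpha i * v $ 1 + um * v $ (i+1)"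
    using i by (subst row) (simp_all add: swlme_matrix_def)
qed

definition swlme_acoustic_vec :: "nat \<Rightarrow> real \<Rightarrow> (nat \<Rightarrow> real) \<Rightarrow> real \<Rightarrow> real vec" where
  "swlme_acoustic_vec N um alpha c = vec (N+2) (\<lambda>r.
     if r = 0 then 1 else if r = 1 then um + c else 2 * alpha (r-1))"

definition swlme_advective_vec :: "nat \<Rightarrow> real \<Rightarrow> real \<Rightarrow> real \<Rightarrow> (nat \<Rightarrow> real) \<Rightarrow> nat \<Rightarrow> real vec" where
  "swlme_advective_vec N g h um alpha j = vec (N+2) (\<lambda>r.
     if r = 0 then weight alpha j else if r = 1 then um * weight alpha j
     else (if r = j+1 then -(g*h) else 0) + alpha (r-1) * weight alpha j / 2)"

lemma swlme_acoustic_eigenvector: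
  assumes c: "c^2 = g*h + 3 * alpha_energy N alpha"
  shows "swlme_matrix N g h um alpha *\<^sub>v swlme_acoustic_vec N um alpha c
    = (um + c) \<cdot>\<^sub>v swlme_acoustic_vec N um alpha c"
proof (rule eq_vecI)
  let ?v = "swlme_acoustic_vec N um alpha c"
  have v: "?v \<in> carrier_vec (N+2)" by (simp add: swlme_acoustic_vec_def)
  fix r assume "r < dim_vec ((um + c) \<cdot>\<^sub>v ?v)"
  then have r: "r < N+2" by (simp add: swlme_acoustic_vec_def)
  from r show "(swlme_matrix N g h um alpha *\<^sub>v ?v) $ r = ((um + c) \<cdot>\<^sub>v ?v) $ r"
  proof (cases rule: less_add_2_cases)
    case 1
    show ?thesis unfolding 1 swlme_matrix_mult_vec_nth(1)[OF v]
      by (simp add: swlme_acoustic_vec_def)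
  next
    case 2
    have "(\<Sum>j=1..N. weight alpha j * ?v $ (j+1)) = 2 * (\<Sum>j=1..N. weight alpha j * alpha j)"
      unfolding sum_distrib_left by (intro sum.cong) (auto simp: swlme_acoustic_vec_def)
    also have "\<dots> = 4 * alpha_energy N alpha"
      by (simp only: sum_weight_mult_alpha)
    finally have sum: "(\<Sum>j=1..N. weight alpha j * ?v $ (j+1)) = 4 * alpha_energy N alpha" .
    show ?thesis unfolding 2 swlme_matrix_mult_vec_nth(2)[OF v] sum using c
      by (simp add: swlme_acoustic_vec_def power2_eq_square algebra_simps)
  next
    case 3
    show ?thesis unfolding 3(1) swlme_matrix_mult_vec_nth(3)[OF v 3(2,3)]
      using 3 by (simp add: swlme_acoustic_vec_def algebra_simps)
  qed
qed (simp add: swlme_matrix_def swlme_acoustic_vec_def)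

lemma swlme_advective_eigenvector:
  assumes j: "1 \<le> j" "j \<le> N"
  shows "swlme_matrix N g h um alpha *\<^sub>v swlme_advective_vec N g h um alpha j
    = um \<cdot>\<^sub>v swlme_advective_vec N g h um alpha j"
proof (rule eq_vecI)
  let ?w = "swlme_advective_vec N g h um alpha j"
  have w: "?w \<in> carrier_vec (N+2)" by (simp add: swlme_advective_vec_def)
  fix r assume "r < dim_vec (um \<cdot>\<^sub>v ?w)"
  then have r: "r < N+2" by (simp add: swlme_advective_vec_def)
  from r show "(swlme_matrix N g h um alpha *\<^sub>v ?w) $ r = (um \<cdot>\<^sub>v ?w) $ r"
  proof (cases rule: less_add_2_cases)
    case 1
    show ?thesis unfolding 1 swlme_matrix_mult_vec_nth(1)[OF w]
      by (simp add: swlme_advective_vec_def)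
  next
    case 2
    have "(\<Sum>i=1..N. weight alpha i * ?w $ (i+1))
        = (\<Sum>i=1..N. if i = j then -(g*h) * weight alpha j else 0)
          + weight alpha j / 2 * (\<Sum>i=1..N. weight alpha i * alpha i)"
      unfolding sum_distrib_left sum.distrib[symmetric]
      by (intro sum.cong) (auto simp: swlme_advective_vec_def algebra_simps)
    also have "\<dots> = -(g*h) * weight alpha j + weight alpha j / 2 * (2 * alpha_energy N alpha)"
      using j by (simp only: sum_weight_mult_alpha sum.delta[OF finite_atLeastAtMost]) simp
    finally have sum: "(\<Sum>i=1..N. weight alpha i * ?w $ (i+1))
      = -(g*h) * weight alpha j + weight alpha j / 2 * (2 * alpha_energy N alpha)" .
    show ?thesis unfolding 2 swlme_matrix_mult_vec_nth(2)[OF w] sum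
      by (simp add: swlme_advective_vec_def algebra_simps power2_eq_square)
  next
    case 3
    show ?thesis unfolding 3(1) swlme_matrix_mult_vec_nth(3)[OF w 3(2,3)]
      using 3 by (simp add: swlme_advective_vec_def algebra_simps)
  qed
qed (simp add: swlme_matrix_def swlme_advective_vec_def)

definition swlme_char_speed :: "real \<Rightarrow> real \<Rightarrow> nat \<Rightarrow> real" where
  "swlme_char_speed um c k = (if k = 0 then um + c else if k = 1 then um - c else um)"

definition swlme_eigvec :: "nat \<Rightarrow> real \<Rightarrow> real \<Rightarrow> real \<Rightarrow> (nat \<Rightarrow> real) \<Rightarrow> real \<Rightarrow> nat \<Rightarrow> real vec" where
  "swlme_eigvec N g h um alpha c k =
     (if k = 0 then swlme_acoustic_vec N um alpha c
      else if k = 1 then swlme_acoustic_vec N um alpha (-c)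
      else swlme_advective_vec N g h um alpha (k-1))"

definition swlme_eigenbasis :: "nat \<Rightarrow> real \<Rightarrow> real \<Rightarrow> real \<Rightarrow> (nat \<Rightarrow> real) \<Rightarrow> real \<Rightarrow> real mat" where
  "swlme_eigenbasis N g h um alpha c = mat_of_cols (N+2) (map (swlme_eigvec N g h um alpha c) [0..<N+2])"

lemma swlme_eigenbasis_carrier: "swlme_eigenbasis N g h um alpha c \<in> carrier_mat (N+2) (N+2)"
  using mat_of_cols_carrier(1)[of "N+2" "map (swlme_eigvec N g h um alpha c) [0..<N+2]"]
  by (simp only: swlme_eigenbasis_def length_map length_upt diff_zero)

lemma swlme_eigvec_carrier: "swlme_eigvec N g h um alpha c k \<in> carrier_vec (N+2)"
  by (simp add: swlme_eigvec_def swlme_acoustic_vec_def swlme_advective_vec_def)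

lemma swlme_eigvec_eigenvector:
  assumes c: "c^2 = g*h + 3 * alpha_energy N alpha" and k: "k < N+2"
  shows "swlme_matrix N g h um alpha *\<^sub>v swlme_eigvec N g h um alpha c k
    = swlme_char_speed um c k \<cdot>\<^sub>v swlme_eigvec N g h um alpha c k"
proof -
  have "(-c)^2 = g*h + 3 * alpha_energy N alpha" using c by simp
  then show ?thesis using k
    by (simp add: swlme_eigvec_def swlme_char_speed_def swlme_acoustic_eigenvector[OF c]
        swlme_acoustic_eigenvector swlme_advective_eigenvector)
qed

lemma swlme_eigenbasis_diagonalizes:
  assumes c: "c^2 = g*h + 3 * alpha_energy N alpha"
  shows "swlme_matrix N g h um alpha * swlme_eigenbasis N g h um alpha c
    = swlme_eigenbasis N g h um alpha c * mat_diag (N+2) (swlme_char_speed um c)"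
proof (rule eq_matI)
  let ?A = "swlme_matrix N g h um alpha" and ?P = "swlme_eigenbasis N g h um alpha c"
  have P: "?P \<in> carrier_mat (N+2) (N+2)" by (rule swlme_eigenbasis_carrier)
  fix i k assume "i < dim_row (?P * mat_diag (N+2) (swlme_char_speed um c))"
    "k < dim_col (?P * mat_diag (N+2) (swlme_char_speed um c))"
  then have i: "i < N+2" and k: "k < N+2" using P by (auto simp: mat_diag_def)
  have "(?A * ?P) $$ (i,k) = (?A *\<^sub>v col ?P k) $ i"
    using i k P swlme_matrix_carrier[of N g h um alpha] by simp
  also have "col ?P k = swlme_eigvec N g h um alpha c k"
    using k swlme_eigvec_carrier by (simp add: swlme_eigenbasis_def del: upt_Suc)
  also have "(?A *\<^sub>v swlme_eigvec N g h um alpha c k) $ i = ?P $$ (i,k) * swlme_char_speed um c k"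
    using i k swlme_eigvec_carrier[of N g h um alpha c k]
    by (simp add: swlme_eigvec_eigenvector[OF c k] swlme_eigenbasis_def mat_of_cols_index del: upt_Suc)
  also have "\<dots> = (?P * mat_diag (N+2) (swlme_char_speed um c)) $$ (i,k)"
    unfolding mat_diag_mult_right[OF P] using i k by simp
  finally show "(?A * ?P) $$ (i,k) = (?P * mat_diag (N+2) (swlme_char_speed um c)) $$ (i,k)" .
qed (use swlme_eigenbasis_carrier[of N g h um alpha c] swlme_matrix_carrier[of N g h um alpha]
    in \<open>auto simp: mat_diag_def\<close>)

lemma swlme_eigenbasis_mult_vec_nth:
  fixes alpha :: "nat \<Rightarrow> real" and x :: "real vec"
  assumes x: "x \<in> carrier_vec (N+2)"
  defines "T \<equiv> (\<Sum>j=1..N. weight alpha j * x $ (j+1))"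
  shows "(swlme_eigenbasis N g h um alpha c *\<^sub>v x) $ 0 = x $ 0 + x $ 1 + T"
    and "(swlme_eigenbasis N g h um alpha c *\<^sub>v x) $ 1 = (um + c) * x $ 0 + (um - c) * x $ 1 + um * T"
    and "1 \<le> i \<Longrightarrow> i \<le> N \<Longrightarrow> (swlme_eigenbasis N g h um alpha c *\<^sub>v x) $ (i+1)
           = 2 * alpha i * (x $ 0 + x $ 1) - g*h * x $ (i+1) + alpha i / 2 * T"
proof -
  let ?P = "swlme_eigenbasis N g h um alpha c" and ?v = "swlme_eigvec N g h um alpha c"
  have row: "(?P *\<^sub>v x) $ r = ?v 0 $ r * x $ 0 + ?v 1 $ r * x $ 1
      + (\<Sum>j=1..N. swlme_advective_vec N g h um alpha j $ r * x $ (j+1))" if "r < N+2" for r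
  proof -
    have "(?P *\<^sub>v x) $ r = (\<Sum>k<N+2. ?v k $ r * x $ k)"
      using that x swlme_eigenbasis_carrier[of N g h um alpha c]
      by (simp add: scalar_prod_def lessThan_atLeast0 swlme_eigenbasis_def mat_of_cols_index del: upt_Suc)
    then show ?thesis by (simp only: sum_lessThan_Suc_Suc_split) (simp add: swlme_eigvec_def)
  qed
  show "(?P *\<^sub>v x) $ 0 = x $ 0 + x $ 1 + T"
    unfolding T_def by (subst row)
      (simp_all add: swlme_eigvec_def swlme_acoustic_vec_def swlme_advective_vec_def)
  show "(?P *\<^sub>v x) $ 1 = (um + c) * x $ 0 + (um - c) * x $ 1 + um * T"
    unfolding T_def by (subst row)
      (simp_all add: swlme_eigvec_def swlme_acoustic_vec_def swlme_advective_vec_def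
        sum_distrib_left mult.assoc)
  assume i: "1 \<le> i" "i \<le> N"
  have "(\<Sum>j=1..N. swlme_advective_vec N g h um alpha j $ (i+1) * x $ (j+1))
      = (\<Sum>j=1..N. (if j = i then - (g*h) * x $ (i+1) else 0) + alpha i / 2 * (weight alpha j * x $ (j+1)))"
    using i by (intro sum.cong) (auto simp: swlme_advective_vec_def algebra_simps)
  also have "\<dots> = - (g*h) * x $ (i+1) + alpha i / 2 * T"
    using i unfolding T_def by (simp add: sum.distrib sum_distrib_left)
  finally show "(?P *\<^sub>v x) $ (i+1) = 2 * alpha i * (x $ 0 + x $ 1) - g*h * x $ (i+1) + alpha i / 2 * T"
    using i by (subst row) (simp_all add: swlme_eigvec_def swlme_acoustic_vec_def algebra_simps)
qed

lemma swlme_eigenbasis_det_nonzero: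
  assumes c: "c \<noteq> 0" and gh: "g*h > 0"
  shows "det (swlme_eigenbasis N g h um alpha c) \<noteq> 0"
proof
  let ?P = "swlme_eigenbasis N g h um alpha c"
  assume "det ?P = 0"
  then obtain x where x: "x \<in> carrier_vec (N+2)" "x \<noteq> 0\<^sub>v (N+2)" and Px: "?P *\<^sub>v x = 0\<^sub>v (N+2)"
    using det_0_iff_vec_prod_zero[OF swlme_eigenbasis_carrier] by blast
  have g: "g \<noteq> 0" and h: "h \<noteq> 0" using gh by auto
  define T where "T = (\<Sum>j=1..N. weight alpha j * x $ (j+1))"
  note row = swlme_eigenbasis_mult_vec_nth[OF x(1), where g = g and h = h and um = um and alpha = alpha and c = c,
      folded T_def, unfolded Px]
  have row0: "x $ 0 + x $ 1 + T = 0" and row1: "(um + c) * x $ 0 + (um - c) * x $ 1 + um * T = 0"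
    using row(1,2) by simp_all
  have "c * (x $ 0 - x $ 1) = (um + c) * x $ 0 + (um - c) * x $ 1 + um * T - um * (x $ 0 + x $ 1 + T)"
    by (simp add: algebra_simps)
  also have "\<dots> = 0" using row0 row1 by simp
  finally have "c * (x $ 0 - x $ 1) = 0" .
  with c have x01: "x $ 1 = x $ 0" by simp
  have xi: "x $ (i+1) = - 3 * alpha i * T / (2 * (g*h))" if "1 \<le> i" "i \<le> N" for i
  proof -
    have "2 * alpha i * (x $ 0 + x $ 1) - g*h * x $ (i+1) + alpha i / 2 * T = 0"
      using row(3)[OF that] that by simp
    then have "g*h * x $ (i+1) = 2 * alpha i * (x $ 0 + x $ 1) + alpha i / 2 * T" by simp
    also have "x $ 0 + x $ 1 = - T" using row0 by simp
    finally have "g*h * x $ (i+1) = - 3 * alpha i * T / 2" by simp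
    with g h show ?thesis by (simp add: field_simps)
  qed
  have "T = (\<Sum>j=1..N. weight alpha j * x $ (j+1))" by (rule T_def)
  also have "\<dots> = (\<Sum>j=1..N. weight alpha j * (- 3 * alpha j * T / (2 * (g*h))))"
    by (intro sum.cong refl) (simp only: xi atLeastAtMost_iff)
  also have "\<dots> = - 3 * T / (2 * (g*h)) * (\<Sum>j=1..N. weight alpha j * alpha j)"
    unfolding sum_distrib_left by (intro sum.cong) simp_all
  also have "\<dots> = - 3 * T * alpha_energy N alpha / (g*h)"
    by (simp only: sum_weight_mult_alpha) simp
  finally have "T * (g*h) = - 3 * T * alpha_energy N alpha"
    using g h by (simp add: field_simps)
  then have "T * (g*h + 3 * alpha_energy N alpha) = 0" by (simp add: algebra_simps)
  moreover have "g*h + 3 * alpha_energy N alpha > 0"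
    using gh alpha_energy_nonneg[of N alpha] by linarith
  ultimately have T0: "T = 0" by simp
  have "x = 0\<^sub>v (N+2)"
  proof (rule eq_vecI)
    fix k assume "k < dim_vec (0\<^sub>v (N+2) :: real vec)"
    then have "k < N + 2" by simp
    then show "x $ k = 0\<^sub>v (N+2) $ k"
      by (cases rule: less_add_2_cases) (use row0 x01 T0 xi in auto)
  qed (use x in simp)
  with x(2) show False ..
qed

definition swlme_wave_speed :: "nat \<Rightarrow> real \<Rightarrow> real \<Rightarrow> (nat \<Rightarrow> real) \<Rightarrow> real" where
  "swlme_wave_speed N g h alpha = sqrt (g*h + 3 * alpha_energy N alpha)"

lemma swlme_wave_speed_pos: "g*h > 0 \<Longrightarrow> swlme_wave_speed N g h alpha > 0"
  unfolding swlme_wave_speed_def using alpha_energy_nonneg[of N alpha] by simp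

lemma swlme_wave_speed_squared:
  "g*h > 0 \<Longrightarrow> (swlme_wave_speed N g h alpha)^2 = g*h + 3 * alpha_energy N alpha"
  unfolding swlme_wave_speed_def using alpha_energy_nonneg[of N alpha] by simp

lemma swlme_matrix_diagonalization:
  assumes gh: "g*h > 0"
  obtains Q where "similar_mat_wit (swlme_matrix N g h um alpha)
    (mat_diag (N+2) (swlme_char_speed um (swlme_wave_speed N g h alpha)))
    (swlme_eigenbasis N g h um alpha (swlme_wave_speed N g h alpha)) Q"
proof -
  let ?c = "swlme_wave_speed N g h alpha"
  have "det (swlme_eigenbasis N g h um alpha ?c) \<noteq> 0"
    by (intro swlme_eigenbasis_det_nonzero gh) (use swlme_wave_speed_pos[OF gh, of N alpha] in linarith)
  then show ?thesis
    using that similar_mat_wit_if_mult_eq[OF swlme_matrix_carrier swlme_eigenbasis_carrier mat_diag_dim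
        _ swlme_eigenbasis_diagonalizes[OF swlme_wave_speed_squared[OF gh]]] by blast
qed

lemma det_char_matrix_swlme_matrix:
  assumes gh: "g*h > 0"
  shows "det (char_matrix (swlme_matrix N g h um alpha) e)
    = (um - e)^N * ((e - um)^2 - g*h - 3 * alpha_energy N alpha)"
proof -
  let ?c = "swlme_wave_speed N g h alpha"
  obtain Q where wit: "similar_mat_wit (swlme_matrix N g h um alpha)
      (mat_diag (N+2) (swlme_char_speed um ?c)) (swlme_eigenbasis N g h um alpha ?c) Q"
    using swlme_matrix_diagonalization[OF gh] .
  have "det (char_matrix (swlme_matrix N g h um alpha) e) = (\<Prod>k<N+2. swlme_char_speed um ?c k - e)"
    by (simp only: det_char_matrix_similar_mat_wit[OF wit] det_char_matrix_mat_diag)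
  also have "\<dots> = (um + ?c - e) * (um - ?c - e) * (um - e)^N"
    by (simp only: prod_lessThan_Suc_Suc_split) (simp add: swlme_char_speed_def)
  also have "\<dots> = (um - e)^N * ((e - um)^2 - ?c^2)"
    by (simp add: power2_eq_square algebra_simps)
  finally show ?thesis by (simp add: swlme_wave_speed_squared[OF gh])
qed

lemma swlme_matrix_eigenvalues:
  assumes N: "N \<ge> 1" and gh: "g*h > 0"
  shows "{e. eigenvalue (swlme_matrix N g h um alpha) e}
    = {um + swlme_wave_speed N g h alpha, um - swlme_wave_speed N g h alpha, um}"
proof -
  let ?c = "swlme_wave_speed N g h alpha"
  have "eigenvalue (swlme_matrix N g h um alpha) e \<longleftrightarrow> (um - e)^N * ((e - um)^2 - ?c^2) = 0" for e
    by (simp add: eigenvalue_det[OF swlme_matrix_carrier] det_char_matrix_swlme_matrix[OF gh]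
        swlme_wave_speed_squared[OF gh] diff_diff_eq)
  also have "\<dots> e \<longleftrightarrow> e = um \<or> (e - um)^2 = ?c^2" for e using N by auto
  also have "\<dots> e \<longleftrightarrow> e \<in> {um + ?c, um - ?c, um}" for e
    using swlme_wave_speed_pos[OF gh, of N alpha] by (auto simp: power2_eq_iff)
  finally show ?thesis by blast
qed

theorem mainTheorem1:
  fixes N :: nat and g h um :: real and alpha :: "nat \<Rightarrow> real"
  assumes "N \<ge> 1" and "g > 0" and "h > 0"
  shows "(\<forall>lam::real. det (swlme_matrix N g h um alpha - lam \<cdot>\<^sub>m 1\<^sub>m (N+2))
            = (um - lam)^N * ((lam - um)^2 - g*h - (\<Sum>i=1..N. 3 * alpha i ^ 2 / (2 * real i + 1))))
    \<and> {lam. eigenvalue (swlme_matrix N g h um alpha) lam}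
        = {um + sqrt (g*h + (\<Sum>i=1..N. 3 * alpha i ^ 2 / (2 * real i + 1))),
           um - sqrt (g*h + (\<Sum>i=1..N. 3 * alpha i ^ 2 / (2 * real i + 1))),
           um}
    \<and> (\<exists>D. D \<in> carrier_mat (N+2) (N+2) \<and> diagonal_mat D \<and> similar_mat (swlme_matrix N g h um alpha) D)"
proof -
  have gh: "g*h > 0" using assms by simp
  let ?A = "swlme_matrix N g h um alpha"
  let ?D = "mat_diag (N+2) (swlme_char_speed um (swlme_wave_speed N g h alpha))"
  have "det (?A - lam \<cdot>\<^sub>m 1\<^sub>m (N+2)) = (um - lam)^N * ((lam - um)^2 - g*h - 3 * alpha_energy N alpha)" for lam
    using det_char_matrix_swlme_matrix[OF gh]
    by (simp add: char_matrix_eq_minus_smult_one[OF swlme_matrix_carrier])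
  moreover have "similar_mat ?A ?D"
    using swlme_matrix_diagonalization[OF gh] unfolding similar_mat_def by blast
  moreover have "diagonal_mat ?D" by (simp add: diagonal_mat_def mat_diag_def)
  ultimately show ?thesis
    using swlme_matrix_eigenvalues[OF assms(1) gh] mat_diag_dim
    unfolding sum_three_alpha_sq swlme_wave_speed_def by blast
qed

end
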